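(* Let $\Gamma$ be a simplicial complex on $V_1=\{x_1,\ldots,x_n\}$ with $m$ facets. Let $G_1,\ldots,G_m\subseteq V_1$ be such that each $V_1\setminus G_j$ is a face of $\Gamma$ and every facet of $\Gamma$ is of the form $V_1\setminus G_j$ for some $j$. Let $y_1,\ldots,y_m$ be new vertices, let $\Delta_{V_1}$ be the $(n-1)$-simplex on $x_1,\ldots,x_n$, and define \[\Delta'=\left\{\sigma\cup\tau:\ \sigma\in\Gamma,\ \tau\subseteq\{y_j:\sigma\subseteq V_1\setminus G_j\}\right\},\qquad \Delta=\Delta'\cup\Delta_{V_1}.\] Then for all $i\geq0$, $\widetilde H_{i+1}(\Delta;\mathbb Z)\cong\widetilde H_i(\Gamma;\mathbb Z)$.
   Context: $\widetilde H_i(-;\mathbb Z)$ denotes reduced simplicial homology with integer coefficients. *)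

theory Defs
  imports "HOL-Algebra.Algebra"
begin

text \<open>The empty face is included, giving reduced (augmented) homology.
  Oriented simplices are oriented by the natural order of the vertices.\<close>

definition facets :: "nat set set \<Rightarrow> nat set set" where
  "facets K = {F \<in> K. \<forall>H\<in>K. F \<subseteq> H \<longrightarrow> H = F}"

text \<open>Integer chains supported on faces of cardinality d (i.e. dimension d-1).\<close>
definition chain_group :: "nat set set \<Rightarrow> nat \<Rightarrow> (nat set \<Rightarrow> int) monoid" where
  "chain_group K d = \<lparr> partial_object.carrier = {c. (\<forall>\<sigma>. c \<sigma> \<noteq> 0 \<longrightarrow> \<sigma> \<in> K \<and> card \<sigma> = d) \<and> finite {\<sigma>. c \<sigma> \<noteq> 0}},
                        monoid.mult = (\<lambda>a b \<sigma>. a \<sigma> + b \<sigma>), monoid.one = (\<lambda>\<sigma>. 0) \<rparr>"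

text \<open>Incidence number [sigma : tau]: if tau = sigma - {v}, it is (-1)^(position of v in sorted sigma).\<close>
definition incidence :: "nat set \<Rightarrow> nat set \<Rightarrow> int" where
  "incidence \<sigma> \<tau> =
     (if finite \<sigma> \<and> \<tau> \<subseteq> \<sigma> \<and> card (\<sigma> - \<tau>) = 1
      then (-1) ^ card {w \<in> \<sigma>. w < the_elem (\<sigma> - \<tau>)} else 0)"

definition boundary :: "(nat set \<Rightarrow> int) \<Rightarrow> (nat set \<Rightarrow> int)" where
  "boundary c = (\<lambda>\<tau>. \<Sum>\<sigma> \<in> {\<sigma>. c \<sigma> \<noteq> 0}. c \<sigma> * incidence \<sigma> \<tau>)"

definition cycles :: "nat set set \<Rightarrow> nat \<Rightarrow> (nat set \<Rightarrow> int) set" where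
  "cycles K d = {c \<in> carrier (chain_group K d). boundary c = (\<lambda>\<tau>. 0)}"

definition boundaries :: "nat set set \<Rightarrow> nat \<Rightarrow> (nat set \<Rightarrow> int) set" where
  "boundaries K d = boundary ` carrier (chain_group K (Suc d))"

text \<open>Reduced simplicial homology with integer coefficients in dimension i
  (faces of dimension i have cardinality i+1).\<close>
definition reduced_homology :: "nat set set \<Rightarrow> nat \<Rightarrow> (nat set \<Rightarrow> int) set monoid" where
  "reduced_homology K i =
     ((chain_group K (Suc i))\<lparr>carrier := cycles K (Suc i)\<rparr>) Mod boundaries K (Suc i)"

definition simplicial_complex_on :: "nat set \<Rightarrow> nat set set \<Rightarrow> bool" where
  "simplicial_complex_on V K \<longleftrightarrow> K \<noteq> {} \<and> K \<subseteq> Pow V \<and> (\<forall>\<sigma>\<in>K. \<forall>\<tau>. \<tau> \<subseteq> \<sigma> \<longrightarrow> \<tau> \<in> K)"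

end

theory Submission
  imports Defs
begin

text \<open>\<open>\<Delta>\<close> is glued from \<open>\<Delta>'\<close> and the full simplex \<open>\<Delta>\<^sub>V\<^sub>1\<close> along \<open>\<Delta>' \<inter> \<Delta>\<^sub>V\<^sub>1 = \<Gamma>\<close>, and both pieces
  are acyclic: the simplex is a cone, and \<open>\<Delta>'\<close> collapses away one maximal face \<open>\<sigma>\<close> of \<open>\<Gamma>\<close> at a time,
  coning off everything over \<open>\<sigma>\<close> from a new vertex \<open>y\<^sub>j\<close> with \<open>\<sigma> \<subseteq> V\<^sub>1 - G\<^sub>j\<close> (one exists because
  \<open>\<sigma>\<close> lies in a facet). So the Mayer--Vietoris connecting map, which sends a cycle \<open>z\<close> of \<open>\<Delta>\<close> to the
  boundary of its part outside \<open>\<Delta>\<^sub>V\<^sub>1\<close>, is an isomorphism \<open>H\<^sub>i\<^sub>+\<^sub>1(\<Delta>) \<cong> H\<^sub>i(\<Gamma>)\<close>.\<close>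

definition pointwise_group :: "(nat set \<Rightarrow> int) set \<Rightarrow> (nat set \<Rightarrow> int) monoid" where
  "pointwise_group S = \<lparr>partial_object.carrier = S, monoid.mult = (\<lambda>a b \<sigma>. a \<sigma> + b \<sigma>),
     monoid.one = (\<lambda>\<sigma>. 0)\<rparr>"

definition additive_subgroup :: "(nat set \<Rightarrow> int) set \<Rightarrow> bool" where
  "additive_subgroup S \<longleftrightarrow> (\<lambda>\<sigma>. 0) \<in> S \<and> (\<forall>a\<in>S. \<forall>b\<in>S. (\<lambda>\<sigma>. a \<sigma> + b \<sigma>) \<in> S)
     \<and> (\<forall>a\<in>S. (\<lambda>\<sigma>. - a \<sigma>) \<in> S)"

lemma pointwise_group_simps [simp]:
  "carrier (pointwise_group S) = S"
  "monoid.mult (pointwise_group S) = (\<lambda>a b \<sigma>. a \<sigma> + b \<sigma>)"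
  "monoid.one (pointwise_group S) = (\<lambda>\<sigma>. 0)"
  by (simp_all add: pointwise_group_def)

lemma comm_group_pointwise_group:
  assumes "additive_subgroup S"
  shows "comm_group (pointwise_group S)"
proof (rule comm_groupI)
  show "\<And>x. x \<in> carrier (pointwise_group S) \<Longrightarrow>
      \<exists>y\<in>carrier (pointwise_group S). y \<otimes>\<^bsub>pointwise_group S\<^esub> x = \<one>\<^bsub>pointwise_group S\<^esub>"
    using assms unfolding additive_subgroup_def by (intro bexI[of _ "\<lambda>\<sigma>. - _ \<sigma>"]) auto
qed (use assms in \<open>auto simp: additive_subgroup_def add.assoc add.commute\<close>)

lemma subgroup_pointwise_group:
  assumes S: "additive_subgroup S" and T: "additive_subgroup T" and "T \<subseteq> S"
  shows "subgroup T (pointwise_group S)"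
proof -
  interpret comm_group "pointwise_group S" by (rule comm_group_pointwise_group[OF S])
  have inv: "inv\<^bsub>pointwise_group S\<^esub> a = (\<lambda>\<sigma>. - a \<sigma>)" if "a \<in> S" for a
    using S that by (intro inv_equality) (auto simp: additive_subgroup_def)
  show ?thesis
    by (rule subgroupI) (use assms inv in \<open>auto simp: additive_subgroup_def\<close>)
qed

lemma reduced_homology_eq:
  "reduced_homology K i = pointwise_group (cycles K (Suc i)) Mod boundaries K (Suc i)"
  unfolding reduced_homology_def chain_group_def pointwise_group_def by simp

lemma quotient_iso_of_hom:
  assumes G: "comm_group G" and H: "comm_group H"
    and N: "subgroup N G" and M: "subgroup M H" and f: "f \<in> hom G H"
    and kernel: "\<And>z. z \<in> carrier G \<Longrightarrow> f z \<in> M \<longleftrightarrow> z \<in> N"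
    and onto: "\<And>c. c \<in> carrier H \<Longrightarrow> \<exists>z\<in>carrier G. \<exists>b\<in>M. f z = b \<otimes>\<^bsub>H\<^esub> c"
  shows "G Mod N \<cong> H Mod M"
proof -
  interpret G: comm_group G by (rule G)
  interpret H: comm_group H by (rule H)
  interpret M: normal M H by (rule H.subgroup_imp_normal[OF M])
  define h where "h = (\<lambda>a. M #>\<^bsub>H\<^esub> a) \<circ> f"
  have h_hom: "h \<in> hom G (H Mod M)"
    unfolding h_def by (rule hom_compose[OF f M.r_coset_hom_Mod])
  interpret h: group_hom G "H Mod M" h
    using h_hom M.factorgroup_is_group by (intro group_hom.intro group_hom_axioms.intro) auto
  have fG: "f z \<in> carrier H" if "z \<in> carrier G" for z
    using f that by (auto simp: hom_def)
  have image: "h ` carrier G = carrier (H Mod M)"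
  proof
    show "h ` carrier G \<subseteq> carrier (H Mod M)" using h_hom by (auto simp: hom_def)
    show "carrier (H Mod M) \<subseteq> h ` carrier G"
    proof
      fix Q assume "Q \<in> carrier (H Mod M)"
      then obtain c where c: "c \<in> carrier H" "Q = M #>\<^bsub>H\<^esub> c"
        by (auto simp: FactGroup_def RCOSETS_def)
      obtain z b where zb: "z \<in> carrier G" "b \<in> M" "f z = b \<otimes>\<^bsub>H\<^esub> c"
        using onto[OF c(1)] by blast
      have "f z \<in> M #>\<^bsub>H\<^esub> c" using zb by (auto simp: r_coset_def)
      then have "M #>\<^bsub>H\<^esub> c = M #>\<^bsub>H\<^esub> f z"
        using H.repr_independence[OF _ _ M] c by auto
      then show "Q \<in> h ` carrier G" using c zb unfolding h_def by (intro image_eqI[of _ _ z]) auto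
    qed
  qed
  have "kernel G (H Mod M) h = N"
  proof -
    have "h z = M \<longleftrightarrow> z \<in> N" if z: "z \<in> carrier G" for z
    proof -
      have "h z = M \<longleftrightarrow> f z \<in> M"
        using H.coset_join1[OF _ _ M] H.coset_join2[OF _ M] fG[OF z] by (auto simp: h_def)
      then show ?thesis using kernel[OF z] by simp
    qed
    then show ?thesis using subgroup.subset[OF N] by (auto simp: kernel_def FactGroup_def)
  qed
  then show ?thesis using h.FactGroup_iso[OF image] by simp
qed

section \<open>Chains and the boundary operator\<close>

definition finite_chain :: "(nat set \<Rightarrow> int) \<Rightarrow> bool" where
  "finite_chain c \<longleftrightarrow> finite {\<sigma>. c \<sigma> \<noteq> 0} \<and> (\<forall>\<sigma>. c \<sigma> \<noteq> 0 \<longrightarrow> finite \<sigma>)"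

lemma finite_chain_support: "finite_chain c \<Longrightarrow> finite {\<sigma>. c \<sigma> \<noteq> 0}"
  by (simp add: finite_chain_def)

lemma finite_chain_vertices: "finite_chain c \<Longrightarrow> finite (\<Union>{\<sigma>. c \<sigma> \<noteq> 0})"
  by (auto simp: finite_chain_def)

lemma incidence_nonzeroD:
  assumes "incidence \<sigma> \<tau> \<noteq> 0"
  shows "finite \<sigma> \<and> (\<exists>u. u \<notin> \<tau> \<and> \<sigma> = insert u \<tau>)"
proof -
  have h: "finite \<sigma> \<and> \<tau> \<subseteq> \<sigma> \<and> card (\<sigma> - \<tau>) = 1"
    using assms unfolding incidence_def by (metis (full_types))
  then obtain u where "\<sigma> - \<tau> = {u}" by (meson card_1_singletonE)
  then show ?thesis using h by blast
qed

definition position :: "nat \<Rightarrow> nat set \<Rightarrow> nat" where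
  "position u \<rho> = card {w\<in>\<rho>. w < u}"

lemma incidence_insert:
  assumes "finite \<tau>" "u \<notin> \<tau>"
  shows "incidence (insert u \<tau>) \<tau> = (-1) ^ position u \<tau>"
proof -
  have "insert u \<tau> - \<tau> = {u}" using assms by auto
  moreover have "{w \<in> insert u \<tau>. w < u} = {w\<in>\<tau>. w < u}" by auto
  ultimately show ?thesis using assms by (simp add: incidence_def position_def subset_insertI)
qed

lemma position_insert:
  assumes "finite \<rho>" "u \<notin> \<rho>" "u \<noteq> v"
  shows "position v (insert u \<rho>) = position v \<rho> + (if u < v then 1 else 0)"
proof -
  have "{w \<in> insert u \<rho>. w < v} = (if u < v then insert u {w\<in>\<rho>. w < v} else {w\<in>\<rho>. w < v})"
    by auto
  then show ?thesis using assms by (simp add: position_def)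
qed

lemma incidence_insert_square:
  "finite \<rho> \<Longrightarrow> u \<notin> \<rho> \<Longrightarrow> incidence (insert u \<rho>) \<rho> * incidence (insert u \<rho>) \<rho> = 1"
  by (simp add: incidence_insert power_mult_distrib[symmetric])

lemma incidence_remove_two_antisym:
  assumes "finite \<rho>" "u \<notin> \<rho>" "v \<notin> \<rho>" "u \<noteq> v"
  shows "incidence (insert v (insert u \<rho>)) (insert u \<rho>) * incidence (insert u \<rho>) \<rho> =
         - (incidence (insert u (insert v \<rho>)) (insert v \<rho>) * incidence (insert v \<rho>) \<rho>)"
  using assms by (cases "u < v") (auto simp: incidence_insert position_insert power_add)

lemma incidence_remove_two_antisym':
  assumes "finite \<rho>" "u \<notin> \<rho>" "v \<notin> \<rho>" "u \<noteq> v"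
  shows "incidence (insert u (insert v \<rho>)) (insert u \<rho>) * incidence (insert u (insert v \<rho>)) (insert v \<rho>)
     = - (incidence (insert v \<rho>) \<rho> * incidence (insert u \<rho>) \<rho>)"
proof -
  have "insert u (insert v \<rho>) = insert v (insert u \<rho>)" by auto
  then have "incidence (insert u (insert v \<rho>)) (insert u \<rho>) = (-1) ^ (position v \<rho> + (if u < v then 1 else 0))"
    using assms by (simp add: incidence_insert position_insert)
  moreover have "incidence (insert u (insert v \<rho>)) (insert v \<rho>) = (-1) ^ (position u \<rho> + (if v < u then 1 else 0))"
    using assms by (simp add: incidence_insert position_insert)
  ultimately show ?thesis
    using assms by (cases "u < v") (auto simp: incidence_insert power_add)
qed

lemma boundary_nonzeroD:
  assumes "boundary c \<tau> \<noteq> 0"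
  shows "\<exists>u. u \<notin> \<tau> \<and> finite (insert u \<tau>) \<and> c (insert u \<tau>) \<noteq> 0"
proof -
  obtain \<sigma> where "c \<sigma> * incidence \<sigma> \<tau> \<noteq> 0"
    using assms unfolding boundary_def by (meson sum.not_neutral_contains_not_neutral)
  then have "c \<sigma> \<noteq> 0" "incidence \<sigma> \<tau> \<noteq> 0" by auto
  with incidence_nonzeroD show ?thesis by blast
qed

lemma boundary_infinite: "\<not> finite \<rho> \<Longrightarrow> boundary c \<rho> = 0"
  using boundary_nonzeroD by (metis finite_insert)

lemma boundary_eq_sum:
  assumes "finite S" "{\<sigma>. c \<sigma> \<noteq> 0} \<subseteq> S"
  shows "boundary c \<tau> = (\<Sum>\<sigma>\<in>S. c \<sigma> * incidence \<sigma> \<tau>)"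
  unfolding boundary_def by (rule sum.mono_neutral_left[OF assms]) auto

lemma boundary_add:
  assumes "finite {\<sigma>. a \<sigma> \<noteq> 0}" "finite {\<sigma>. b \<sigma> \<noteq> 0}"
  shows "boundary (\<lambda>\<sigma>. a \<sigma> + b \<sigma>) = (\<lambda>\<tau>. boundary a \<tau> + boundary b \<tau>)"
proof
  fix \<tau>
  let ?S = "{\<sigma>. a \<sigma> \<noteq> 0} \<union> {\<sigma>. b \<sigma> \<noteq> 0}"
  have fin: "finite ?S" using assms by simp
  have "boundary (\<lambda>\<sigma>. a \<sigma> + b \<sigma>) \<tau> = (\<Sum>\<sigma>\<in>?S. (a \<sigma> + b \<sigma>) * incidence \<sigma> \<tau>)"
    by (rule boundary_eq_sum[OF fin]) auto
  also have "\<dots> = (\<Sum>\<sigma>\<in>?S. a \<sigma> * incidence \<sigma> \<tau>) + (\<Sum>\<sigma>\<in>?S. b \<sigma> * incidence \<sigma> \<tau>)"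
    by (simp only: distrib_right sum.distrib)
  also have "\<dots> = boundary a \<tau> + boundary b \<tau>"
    by (simp only: boundary_eq_sum[OF fin] Un_upper1 Un_upper2)
  finally show "boundary (\<lambda>\<sigma>. a \<sigma> + b \<sigma>) \<tau> = boundary a \<tau> + boundary b \<tau>" .
qed

lemma boundary_uminus: "boundary (\<lambda>\<sigma>. - a \<sigma>) = (\<lambda>\<tau>. - boundary a \<tau>)"
  unfolding boundary_def by (simp add: sum_negf)

lemma boundary_diff:
  assumes "finite {\<sigma>. a \<sigma> \<noteq> 0}" "finite {\<sigma>. b \<sigma> \<noteq> 0}"
  shows "boundary (\<lambda>\<sigma>. a \<sigma> - b \<sigma>) = (\<lambda>\<tau>. boundary a \<tau> - boundary b \<tau>)"
  using boundary_add[OF assms(1), of "\<lambda>\<sigma>. - b \<sigma>"] assms(2) boundary_uminus[of b] by simp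

lemma boundary_zero: "boundary (\<lambda>\<sigma>. 0) = (\<lambda>\<tau>. 0)"
  unfolding boundary_def by simp

lemma boundary_eq_sum_cofaces:
  assumes "finite {\<sigma>. c \<sigma> \<noteq> 0}" "finite \<tau>" "finite U" and sub: "\<And>\<sigma>. c \<sigma> \<noteq> 0 \<Longrightarrow> \<sigma> \<subseteq> U"
  shows "boundary c \<tau> = (\<Sum>u\<in>U-\<tau>. c (insert u \<tau>) * incidence (insert u \<tau>) \<tau>)"
proof -
  let ?g = "\<lambda>\<sigma>. c \<sigma> * incidence \<sigma> \<tau>"
  let ?I = "(\<lambda>u. insert u \<tau>) ` (U - \<tau>)"
  have "boundary c \<tau> = sum ?g ({\<sigma>. c \<sigma> \<noteq> 0} \<union> ?I)"
    using assms by (intro boundary_eq_sum) auto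
  also have "\<dots> = sum ?g ?I"
  proof (rule sum.mono_neutral_right)
    show "\<forall>\<sigma>\<in>{\<sigma>. c \<sigma> \<noteq> 0} \<union> ?I - ?I. ?g \<sigma> = 0"
      using sub incidence_nonzeroD by fastforce
  qed (use assms in auto)
  also have "\<dots> = (\<Sum>u\<in>U-\<tau>. ?g (insert u \<tau>))"
    by (subst sum.reindex) (auto simp: inj_on_def)
  finally show ?thesis .
qed

lemma sum_offdiagonal_antisym:
  fixes f :: "'a \<Rightarrow> 'a \<Rightarrow> 'b :: linordered_ab_group_add"
  assumes "finite W" and antisym: "\<And>u v. u \<in> W \<Longrightarrow> v \<in> W \<Longrightarrow> u \<noteq> v \<Longrightarrow> f u v = - f v u"
  shows "(\<Sum>u\<in>W. \<Sum>v\<in>W-{u}. f u v) = 0"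
proof -
  define g where "g u v = (if u = v then 0 else f u v)" for u v
  have "(\<Sum>v\<in>W-{u}. f u v) = (\<Sum>v\<in>W. g u v)" if "u \<in> W" for u
  proof -
    have "(\<Sum>v\<in>W. g u v) = g u u + (\<Sum>v\<in>W-{u}. g u v)" using assms(1) that by (rule sum.remove)
    moreover have "(\<Sum>v\<in>W-{u}. g u v) = (\<Sum>v\<in>W-{u}. f u v)"
      by (rule sum.cong) (auto simp: g_def)
    ultimately show ?thesis by (simp add: g_def)
  qed
  then have offdiagonal: "(\<Sum>u\<in>W. \<Sum>v\<in>W-{u}. f u v) = (\<Sum>u\<in>W. \<Sum>v\<in>W. g u v)" by simp
  have "(\<Sum>u\<in>W. \<Sum>v\<in>W. g u v) = (\<Sum>v\<in>W. \<Sum>u\<in>W. g u v)" by (rule sum.swap)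
  also have "\<dots> = (\<Sum>v\<in>W. \<Sum>u\<in>W. - g v u)"
  proof (intro sum.cong refl)
    fix u v assume "u \<in> W" "v \<in> W"
    then show "g u v = - g v u" using antisym[of u v] by (auto simp: g_def)
  qed
  also have "\<dots> = - (\<Sum>v\<in>W. \<Sum>u\<in>W. g v u)" by (simp add: sum_negf)
  finally show ?thesis unfolding offdiagonal by (simp add: equal_neg_zero)
qed

lemma boundary_nonzero_coface:
  assumes "boundary c \<tau> \<noteq> 0"
  obtains \<sigma> where "c \<sigma> \<noteq> 0" "\<tau> \<subseteq> \<sigma>" "finite \<sigma>" "card \<sigma> = Suc (card \<tau>)"
  using boundary_nonzeroD[OF assms] by (metis card_insert_disjoint finite_insert subset_insertI)

lemma finite_chain_boundary:
  assumes "finite_chain c"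
  shows "finite_chain (boundary c)"
proof -
  have "{\<tau>. boundary c \<tau> \<noteq> 0} \<subseteq> Pow (\<Union>{\<sigma>. c \<sigma> \<noteq> 0})"
    by (auto elim: boundary_nonzero_coface)
  then show ?thesis using finite_chain_vertices[OF assms]
    unfolding finite_chain_def by (metis boundary_infinite finite_Pow_iff finite_subset)
qed

lemma boundary_boundary:
  assumes "finite_chain c"
  shows "boundary (boundary c) = (\<lambda>\<rho>. 0)"
proof
  fix \<rho>
  show "boundary (boundary c) \<rho> = 0"
  proof (cases "finite \<rho>")
    case False
    then show ?thesis by (rule boundary_infinite)
  next
    case True
    let ?V = "\<Union>{\<sigma>. c \<sigma> \<noteq> 0}"
    have V: "finite ?V" by (rule finite_chain_vertices[OF assms])
    define W where "W = ?V - \<rho>"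
    define f where "f u v = c (insert v (insert u \<rho>)) *
      (incidence (insert v (insert u \<rho>)) (insert u \<rho>) * incidence (insert u \<rho>) \<rho>)" for u v
    have "boundary (boundary c) \<rho> = (\<Sum>u\<in>W. boundary c (insert u \<rho>) * incidence (insert u \<rho>) \<rho>)"
      unfolding W_def using finite_chain_support[OF finite_chain_boundary[OF assms]] True V
      by (intro boundary_eq_sum_cofaces) (auto elim: boundary_nonzero_coface)
    also have "\<dots> = (\<Sum>u\<in>W. \<Sum>v\<in>W-{u}. f u v)"
    proof (rule sum.cong[OF refl])
      fix u assume "u \<in> W"
      then have "?V - insert u \<rho> = W - {u}" "finite (insert u \<rho>)" using True by (auto simp: W_def)
      then have "boundary c (insert u \<rho>) =
          (\<Sum>v\<in>W-{u}. c (insert v (insert u \<rho>)) * incidence (insert v (insert u \<rho>)) (insert u \<rho>))"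
        using boundary_eq_sum_cofaces[OF finite_chain_support[OF assms] _ V, of "insert u \<rho>"] by auto
      then show "boundary c (insert u \<rho>) * incidence (insert u \<rho>) \<rho> = (\<Sum>v\<in>W-{u}. f u v)"
        by (simp add: f_def sum_distrib_right mult.assoc)
    qed
    also have "\<dots> = 0"
    proof (rule sum_offdiagonal_antisym)
      show "finite W" unfolding W_def using V by simp
      fix u v assume "u \<in> W" "v \<in> W" "u \<noteq> v"
      moreover have "insert u (insert v \<rho>) = insert v (insert u \<rho>)" by auto
      ultimately show "f u v = - f v u"
        unfolding f_def using incidence_remove_two_antisym[OF True, of u v] by (simp add: W_def)
    qed
    finally show ?thesis .
  qed
qed

section \<open>Cones\<close>

definition cone :: "nat \<Rightarrow> (nat set \<Rightarrow> int) \<Rightarrow> (nat set \<Rightarrow> int)" where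
  "cone y c = (\<lambda>\<rho>. if y \<in> \<rho> then incidence \<rho> (\<rho> - {y}) * c (\<rho> - {y}) else 0)"

lemma cone_nonzeroD: "cone y c \<rho> \<noteq> 0 \<Longrightarrow> y \<in> \<rho> \<and> c (\<rho> - {y}) \<noteq> 0"
  unfolding cone_def by (auto split: if_splits)

lemma finite_chain_cone:
  assumes "finite_chain c"
  shows "finite_chain (cone y c)"
proof -
  have support: "\<rho> \<in> insert y ` {\<sigma>. c \<sigma> \<noteq> 0}" and "finite \<rho>" if "cone y c \<rho> \<noteq> 0" for \<rho>
  proof -
    have "y \<in> \<rho>" "c (\<rho> - {y}) \<noteq> 0" using cone_nonzeroD[OF that] by auto
    moreover have "finite (\<rho> - {y})" using assms calculation(2) unfolding finite_chain_def by blast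
    ultimately show "\<rho> \<in> insert y ` {\<sigma>. c \<sigma> \<noteq> 0}" "finite \<rho>" by (auto intro: image_eqI[of _ _ "\<rho> - {y}"])
  qed
  have "finite (insert y ` {\<sigma>. c \<sigma> \<noteq> 0})" using finite_chain_support[OF assms] by simp
  then have "finite {\<rho>. cone y c \<rho> \<noteq> 0}" using support by (blast intro: finite_subset)
  then show ?thesis using \<open>\<And>\<rho>. cone y c \<rho> \<noteq> 0 \<Longrightarrow> finite \<rho>\<close> by (simp add: finite_chain_def)
qed

lemma boundary_cone_apex_notin:
  assumes c: "finite_chain c" and "finite \<rho>" "y \<notin> \<rho>"
  shows "boundary (cone y c) \<rho> = c \<rho>"
proof -
  define U where "U = insert y (\<Union>{\<sigma>. c \<sigma> \<noteq> 0})"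
  have U: "finite U" "y \<in> U - \<rho>" unfolding U_def using finite_chain_vertices[OF c] assms by auto
  have "boundary (cone y c) \<rho> = (\<Sum>u\<in>U-\<rho>. cone y c (insert u \<rho>) * incidence (insert u \<rho>) \<rho>)"
    using finite_chain_support[OF finite_chain_cone[OF c]] assms U
    by (intro boundary_eq_sum_cofaces) (auto simp: U_def dest!: cone_nonzeroD)
  also have "\<dots> = (\<Sum>u\<in>U-\<rho>. if u = y then cone y c (insert y \<rho>) * incidence (insert y \<rho>) \<rho> else 0)"
    using assms by (intro sum.cong) (auto simp: cone_def)
  also have "\<dots> = cone y c (insert y \<rho>) * incidence (insert y \<rho>) \<rho>"
    using U by simp
  also have "\<dots> = c \<rho>"
    using incidence_insert_square[of \<rho> y] assms by (simp add: cone_def)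
  finally show ?thesis .
qed

lemma boundary_cone_apex_in:
  assumes c: "finite_chain c" and r: "finite r" "y \<notin> r"
  shows "boundary (cone y c) (insert y r) + cone y (boundary c) (insert y r) = c (insert y r)"
proof -
  define U where "U = insert y (\<Union>{\<sigma>. c \<sigma> \<noteq> 0})"
  have U: "finite U" "U - r = insert y (U - insert y r)" "y \<notin> U - insert y r"
    unfolding U_def using finite_chain_vertices[OF c] r by auto
  let ?s = "\<lambda>u. incidence (insert y r) r * incidence (insert u r) r"
  have "boundary (cone y c) (insert y r) =
      (\<Sum>u\<in>U - insert y r. cone y c (insert u (insert y r)) * incidence (insert u (insert y r)) (insert y r))"
    using finite_chain_support[OF finite_chain_cone[OF c]] r
    by (intro boundary_eq_sum_cofaces) (auto simp: U_def finite_chain_vertices[OF c] dest!: cone_nonzeroD)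
  also have "\<dots> = (\<Sum>u\<in>U - insert y r. c (insert u r) *
      (incidence (insert u (insert y r)) (insert u r) * incidence (insert u (insert y r)) (insert y r)))"
  proof (rule sum.cong[OF refl])
    fix u assume "u \<in> U - insert y r"
    then have "insert u (insert y r) - {y} = insert u r" using r by auto
    then show "cone y c (insert u (insert y r)) * incidence (insert u (insert y r)) (insert y r) =
      c (insert u r) * (incidence (insert u (insert y r)) (insert u r) *
        incidence (insert u (insert y r)) (insert y r))"
      unfolding cone_def by simp
  qed
  also have "\<dots> = - (\<Sum>u\<in>U - insert y r. c (insert u r) * ?s u)"
    using incidence_remove_two_antisym'[OF r(1) _ r(2)]
    by (auto simp: sum_negf[symmetric] intro!: sum.cong)
  finally have cone_part: "boundary (cone y c) (insert y r) = \<dots>" .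
  have "boundary c r = (\<Sum>u\<in>U-r. c (insert u r) * incidence (insert u r) r)"
    using finite_chain_support[OF c] r U by (intro boundary_eq_sum_cofaces) (auto simp: U_def)
  also have "\<dots> = c (insert y r) * incidence (insert y r) r +
      (\<Sum>u\<in>U - insert y r. c (insert u r) * incidence (insert u r) r)"
    unfolding U(2) by (rule sum.insert[OF finite_Diff[OF U(1)] U(3)])
  finally have "cone y (boundary c) (insert y r) = incidence (insert y r) r * (c (insert y r) *
      incidence (insert y r) r + (\<Sum>u\<in>U - insert y r. c (insert u r) * incidence (insert u r) r))"
    unfolding cone_def using r by simp
  also have "\<dots> = c (insert y r) * (incidence (insert y r) r * incidence (insert y r) r) +
      (\<Sum>u\<in>U - insert y r. c (insert u r) * ?s u)"
    by (simp add: distrib_left sum_distrib_left ac_simps)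
  also have "\<dots> = c (insert y r) + (\<Sum>u\<in>U - insert y r. c (insert u r) * ?s u)"
    using incidence_insert_square[OF r] by simp
  finally show ?thesis using cone_part by linarith
qed

lemma boundary_cone:
  assumes "finite_chain c"
  shows "boundary (cone y c) \<rho> + cone y (boundary c) \<rho> = c \<rho>"
proof (cases "finite \<rho>")
  case False
  then have "c \<rho> = 0" using assms by (auto simp: finite_chain_def)
  with False show ?thesis by (simp add: boundary_infinite cone_def)
next
  case True
  show ?thesis
  proof (cases "y \<in> \<rho>")
    case True
    then obtain r where "\<rho> = insert y r" "y \<notin> r" by (meson Set.set_insert)
    with \<open>finite \<rho>\<close> show ?thesis using boundary_cone_apex_in[OF assms] by simp
  next
    case False
    then show ?thesis using boundary_cone_apex_notin[OF assms True] by (simp add: cone_def)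
  qed
qed

definition downward_closed :: "nat set set \<Rightarrow> bool" where
  "downward_closed K \<longleftrightarrow> (\<forall>\<sigma>\<in>K. \<forall>\<tau>. \<tau> \<subseteq> \<sigma> \<longrightarrow> \<tau> \<in> K)"

definition restrict_chain :: "nat set set \<Rightarrow> (nat set \<Rightarrow> int) \<Rightarrow> (nat set \<Rightarrow> int)" where
  "restrict_chain S c = (\<lambda>\<sigma>. if \<sigma> \<in> S then c \<sigma> else 0)"

lemma downward_closedD: "downward_closed K \<Longrightarrow> \<sigma> \<in> K \<Longrightarrow> \<tau> \<subseteq> \<sigma> \<Longrightarrow> \<tau> \<in> K"
  by (auto simp: downward_closed_def)

lemma downward_closed_Un: "downward_closed K \<Longrightarrow> downward_closed L \<Longrightarrow> downward_closed (K \<union> L)"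
  by (auto simp: downward_closed_def)

lemma downward_closed_Int: "downward_closed K \<Longrightarrow> downward_closed L \<Longrightarrow> downward_closed (K \<inter> L)"
  by (auto simp: downward_closed_def)

lemma chain_group_iff:
  "c \<in> carrier (chain_group K d) \<longleftrightarrow>
     (\<forall>\<sigma>. c \<sigma> \<noteq> 0 \<longrightarrow> \<sigma> \<in> K \<and> card \<sigma> = d) \<and> finite {\<sigma>. c \<sigma> \<noteq> 0}"
  by (simp add: chain_group_def)

lemma chain_group_support: "c \<in> carrier (chain_group K d) \<Longrightarrow> finite {\<sigma>. c \<sigma> \<noteq> 0}"
  by (simp add: chain_group_iff)

lemma chain_group_zero: "(\<lambda>\<sigma>. 0) \<in> carrier (chain_group K d)"
  by (simp add: chain_group_iff)

lemma chain_group_add: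
  assumes "a \<in> carrier (chain_group K d)" "b \<in> carrier (chain_group K d)"
  shows "(\<lambda>\<sigma>. a \<sigma> + b \<sigma>) \<in> carrier (chain_group K d)"
proof -
  have "{\<sigma>. a \<sigma> + b \<sigma> \<noteq> 0} \<subseteq> {\<sigma>. a \<sigma> \<noteq> 0} \<union> {\<sigma>. b \<sigma> \<noteq> 0}" by auto
  then have "finite {\<sigma>. a \<sigma> + b \<sigma> \<noteq> 0}"
    using assms by (auto intro: finite_subset dest!: chain_group_support)
  moreover have "\<sigma> \<in> K \<and> card \<sigma> = d" if "a \<sigma> + b \<sigma> \<noteq> 0" for \<sigma>
  proof -
    have "a \<sigma> \<noteq> 0 \<or> b \<sigma> \<noteq> 0" using that by linarith
    then show ?thesis using assms unfolding chain_group_iff by blast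
  qed
  ultimately show ?thesis unfolding chain_group_iff by blast
qed

lemma chain_group_uminus: "a \<in> carrier (chain_group K d) \<Longrightarrow> (\<lambda>\<sigma>. - a \<sigma>) \<in> carrier (chain_group K d)"
  by (simp add: chain_group_iff)

lemma chain_group_diff:
  "a \<in> carrier (chain_group K d) \<Longrightarrow> b \<in> carrier (chain_group K d) \<Longrightarrow>
    (\<lambda>\<sigma>. a \<sigma> - b \<sigma>) \<in> carrier (chain_group K d)"
  using chain_group_add[of a K d "\<lambda>\<sigma>. - b \<sigma>"] chain_group_uminus[of b K d] by simp

lemma chain_group_Int:
  "a \<in> carrier (chain_group K d) \<Longrightarrow> a \<in> carrier (chain_group L d) \<Longrightarrow> a \<in> carrier (chain_group (K \<inter> L) d)"
  by (simp add: chain_group_iff)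

lemma chain_group_restrict:
  assumes "c \<in> carrier (chain_group K d)" "K \<inter> S \<subseteq> K'"
  shows "restrict_chain S c \<in> carrier (chain_group K' d)"
proof -
  have "{\<sigma>. restrict_chain S c \<sigma> \<noteq> 0} \<subseteq> {\<sigma>. c \<sigma> \<noteq> 0}" by (auto simp: restrict_chain_def)
  then show ?thesis
    using assms unfolding chain_group_iff restrict_chain_def by (auto intro: finite_subset)
qed

lemma chain_group_mono: "a \<in> carrier (chain_group K d) \<Longrightarrow> K \<subseteq> K' \<Longrightarrow> a \<in> carrier (chain_group K' d)"
  by (auto simp: chain_group_iff)

lemma finite_support_restrict_chain:
  "finite {\<sigma>. c \<sigma> \<noteq> 0} \<Longrightarrow> finite {\<sigma>. restrict_chain S c \<sigma> \<noteq> 0}"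
  by (rule rev_finite_subset) (auto simp: restrict_chain_def)

lemma restrict_chain_split: "(\<lambda>\<sigma>. restrict_chain S c \<sigma> + restrict_chain (- S) c \<sigma>) = c"
  by (auto simp: restrict_chain_def)

lemma restrict_chain_add:
  "restrict_chain S (\<lambda>\<sigma>. a \<sigma> + b \<sigma>) = (\<lambda>\<sigma>. restrict_chain S a \<sigma> + restrict_chain S b \<sigma>)"
  by (auto simp: restrict_chain_def)

lemma finite_chain_chain_group:
  "c \<in> carrier (chain_group K d) \<Longrightarrow> \<forall>\<sigma>\<in>K. finite \<sigma> \<Longrightarrow> finite_chain c"
  unfolding chain_group_iff finite_chain_def by blast

lemma finite_chain_chain_group_Suc: "c \<in> carrier (chain_group K (Suc d)) \<Longrightarrow> finite_chain c"
  unfolding chain_group_iff finite_chain_def by (metis card.infinite nat.distinct(1))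

lemma boundary_split:
  assumes "finite {\<sigma>. c \<sigma> \<noteq> 0}"
  shows "boundary c = (\<lambda>\<tau>. boundary (restrict_chain S c) \<tau> + boundary (restrict_chain (- S) c) \<tau>)"
  using boundary_add[OF finite_support_restrict_chain[OF assms, of S] finite_support_restrict_chain[OF assms, of "- S"]]
  unfolding restrict_chain_split .

lemma boundary_chain_group:
  assumes "downward_closed K" "a \<in> carrier (chain_group K (Suc d))"
  shows "boundary a \<in> carrier (chain_group K d)"
  unfolding chain_group_iff
proof
  show "finite {\<sigma>. boundary a \<sigma> \<noteq> 0}"
    using assms(2) finite_chain_boundary finite_chain_chain_group_Suc finite_chain_support by blast
  show "\<forall>\<tau>. boundary a \<tau> \<noteq> 0 \<longrightarrow> \<tau> \<in> K \<and> card \<tau> = d"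
  proof (intro allI impI)
    fix \<tau> assume "boundary a \<tau> \<noteq> 0"
    then obtain \<sigma> where \<sigma>: "a \<sigma> \<noteq> 0" "\<tau> \<subseteq> \<sigma>" "card \<sigma> = Suc (card \<tau>)"
      by (rule boundary_nonzero_coface)
    then have "\<sigma> \<in> K" "card \<sigma> = Suc d" using assms(2) unfolding chain_group_iff by blast+
    then show "\<tau> \<in> K \<and> card \<tau> = d" using \<sigma> downward_closedD[OF assms(1)] by auto
  qed
qed

lemma additive_subgroup_cycles: "additive_subgroup (cycles K d)"
  unfolding additive_subgroup_def cycles_def
proof (intro conjI ballI)
  show "(\<lambda>\<sigma>. 0) \<in> {c \<in> carrier (chain_group K d). boundary c = (\<lambda>\<tau>. 0)}"
    using chain_group_zero boundary_zero by simp
next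
  fix a b assume a: "a \<in> {c \<in> carrier (chain_group K d). boundary c = (\<lambda>\<tau>. 0)}"
    and b: "b \<in> {c \<in> carrier (chain_group K d). boundary c = (\<lambda>\<tau>. 0)}"
  then have "boundary (\<lambda>\<sigma>. a \<sigma> + b \<sigma>) = (\<lambda>\<tau>. 0)"
    using boundary_add[OF chain_group_support chain_group_support, of a K d b K d] by simp
  then show "(\<lambda>\<sigma>. a \<sigma> + b \<sigma>) \<in> {c \<in> carrier (chain_group K d). boundary c = (\<lambda>\<tau>. 0)}"
    using a b chain_group_add by blast
next
  fix a assume "a \<in> {c \<in> carrier (chain_group K d). boundary c = (\<lambda>\<tau>. 0)}"
  then show "(\<lambda>\<sigma>. - a \<sigma>) \<in> {c \<in> carrier (chain_group K d). boundary c = (\<lambda>\<tau>. 0)}"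
    by (simp add: boundary_uminus chain_group_uminus)
qed

lemma additive_subgroup_boundaries: "additive_subgroup (boundaries K d)"
  unfolding additive_subgroup_def boundaries_def
proof (intro conjI ballI)
  show "(\<lambda>\<sigma>. 0) \<in> boundary ` carrier (chain_group K (Suc d))"
    by (rule image_eqI[of _ _ "\<lambda>\<sigma>. 0"]) (simp_all add: boundary_zero chain_group_zero)
next
  fix a b assume "a \<in> boundary ` carrier (chain_group K (Suc d))" "b \<in> boundary ` carrier (chain_group K (Suc d))"
  then obtain a' b' where a'b': "a' \<in> carrier (chain_group K (Suc d))" "b' \<in> carrier (chain_group K (Suc d))"
    and "a = boundary a'" "b = boundary b'" by blast
  then have "(\<lambda>\<sigma>. a \<sigma> + b \<sigma>) = boundary (\<lambda>\<sigma>. a' \<sigma> + b' \<sigma>)"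
    using boundary_add[OF chain_group_support chain_group_support, of a' K "Suc d" b' K "Suc d"] by simp
  then show "(\<lambda>\<sigma>. a \<sigma> + b \<sigma>) \<in> boundary ` carrier (chain_group K (Suc d))"
    using chain_group_add[OF a'b'] by (rule image_eqI)
next
  fix a assume "a \<in> boundary ` carrier (chain_group K (Suc d))"
  then obtain a' where "a' \<in> carrier (chain_group K (Suc d))" "a = boundary a'" by blast
  then show "(\<lambda>\<sigma>. - a \<sigma>) \<in> boundary ` carrier (chain_group K (Suc d))"
    using chain_group_uminus by (auto simp: boundary_uminus[symmetric])
qed

lemma boundaries_subset_cycles: "downward_closed K \<Longrightarrow> boundaries K d \<subseteq> cycles K d"
  unfolding boundaries_def cycles_def
  using boundary_chain_group boundary_boundary finite_chain_chain_group_Suc by blast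

section \<open>Acyclicity\<close>

text \<open>Chains of degree \<open>k\<close> live on faces of cardinality \<open>k\<close>, so \<open>acyclic_at K k\<close> says
  \<open>H\<^sub>k\<^sub>-\<^sub>1(K) = 0\<close> in reduced homology.\<close>

definition acyclic_at :: "nat set set \<Rightarrow> nat \<Rightarrow> bool" where
  "acyclic_at K k \<longleftrightarrow> cycles K k \<subseteq> boundaries K k"

lemma acyclic_atD:
  assumes "acyclic_at K k" "z \<in> carrier (chain_group K k)" "boundary z = (\<lambda>\<tau>. 0)"
  obtains a where "a \<in> carrier (chain_group K (Suc k))" "boundary a = z"
  using assms unfolding acyclic_at_def cycles_def boundaries_def by blast

lemma acyclic_at_no_faces:
  assumes "\<And>\<sigma>. \<sigma> \<in> K \<Longrightarrow> card \<sigma> \<noteq> k"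
  shows "acyclic_at K k"
proof -
  have "(\<lambda>\<sigma>. 0) \<in> boundaries K k" unfolding boundaries_def
    by (rule image_eqI[of _ _ "\<lambda>\<sigma>. 0"]) (simp_all add: boundary_zero chain_group_zero)
  moreover have "cycles K k \<subseteq> {\<lambda>\<sigma>. 0}" using assms by (auto simp: cycles_def chain_group_iff)
  ultimately show ?thesis unfolding acyclic_at_def by blast
qed

text \<open>Passing from \<open>K\<^sub>0\<close> to \<open>K\<close> adds only faces whose cone with apex \<open>y\<close> is already there,
  and \<open>y\<close> can be added to every face of \<open>K\<^sub>0\<close> lying below a new face: the new part of a cycle
  is then coned off, and what remains is a cycle of \<open>K\<^sub>0\<close>.\<close>

lemma cone_restrict_chain_group:
  assumes "z \<in> carrier (chain_group K k)" "\<forall>\<sigma>\<in>K. finite \<sigma>"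
    and cone_new: "\<And>\<rho>. \<rho> \<in> K \<Longrightarrow> \<rho> \<notin> K\<^sub>0 \<Longrightarrow> insert y \<rho> \<in> K"
  shows "cone y (restrict_chain (- K\<^sub>0) z) \<in> carrier (chain_group K (Suc k))"
  unfolding chain_group_iff
proof
  show "finite {\<rho>. cone y (restrict_chain (- K\<^sub>0) z) \<rho> \<noteq> 0}"
    using finite_chain_chain_group[OF chain_group_restrict[OF assms(1), of "- K\<^sub>0" K] assms(2)]
    by (simp add: finite_chain_support finite_chain_cone)
  show "\<forall>\<rho>. cone y (restrict_chain (- K\<^sub>0) z) \<rho> \<noteq> 0 \<longrightarrow> \<rho> \<in> K \<and> card \<rho> = Suc k"
  proof (intro allI impI)
    fix \<rho> assume "cone y (restrict_chain (- K\<^sub>0) z) \<rho> \<noteq> 0"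
    then have \<rho>: "y \<in> \<rho>" "\<rho> - {y} \<notin> K\<^sub>0" "z (\<rho> - {y}) \<noteq> 0"
      by (auto dest!: cone_nonzeroD simp: restrict_chain_def split: if_splits)
    then have "\<rho> - {y} \<in> K" "card (\<rho> - {y}) = k" using assms(1) unfolding chain_group_iff by blast+
    moreover have "insert y (\<rho> - {y}) = \<rho>" using \<rho> by auto
    moreover have "finite (\<rho> - {y})" using calculation(1) assms(2) by blast
    ultimately show "\<rho> \<in> K \<and> card \<rho> = Suc k"
      using cone_new[of "\<rho> - {y}"] \<rho> card_Suc_Diff1[of \<rho> y] by simp
  qed
qed

lemma boundary_restrict_cycle_outside:
  assumes "finite {\<sigma>. z \<sigma> \<noteq> 0}" "boundary z = (\<lambda>\<tau>. 0)" "downward_closed K\<^sub>0" "\<tau> \<notin> K\<^sub>0"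
  shows "boundary (restrict_chain (- K\<^sub>0) z) \<tau> = 0"
proof -
  have "boundary (restrict_chain K\<^sub>0 z) \<tau> = 0"
  proof (rule ccontr)
    assume "boundary (restrict_chain K\<^sub>0 z) \<tau> \<noteq> 0"
    then obtain \<sigma> where "restrict_chain K\<^sub>0 z \<sigma> \<noteq> 0" "\<tau> \<subseteq> \<sigma>" by (rule boundary_nonzero_coface)
    then have "\<sigma> \<in> K\<^sub>0" "\<tau> \<subseteq> \<sigma>" by (simp_all add: restrict_chain_def split: if_split_asm)
    then show False using assms(4) downward_closedD[OF assms(3)] by blast
  qed
  then show ?thesis using fun_cong[OF boundary_split[OF assms(1), of K\<^sub>0], of \<tau>] assms(2) by simp
qed

lemma cone_boundary_restrict_chain_group:
  assumes z: "z \<in> cycles K k" and "K\<^sub>0 \<subseteq> K" "downward_closed K\<^sub>0" "\<forall>\<sigma>\<in>K. finite \<sigma>"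
    and cone_old: "\<And>\<rho> \<sigma>. \<rho> \<in> K\<^sub>0 \<Longrightarrow> \<sigma> \<in> K \<Longrightarrow> \<sigma> \<notin> K\<^sub>0 \<Longrightarrow> \<rho> \<subseteq> \<sigma> \<Longrightarrow> insert y \<rho> \<in> K\<^sub>0"
  shows "cone y (boundary (restrict_chain (- K\<^sub>0) z)) \<in> carrier (chain_group K\<^sub>0 k)"
  unfolding chain_group_iff
proof
  have zK: "z \<in> carrier (chain_group K k)" and bz: "boundary z = (\<lambda>\<tau>. 0)"
    using z by (auto simp: cycles_def)
  have fin: "finite_chain (restrict_chain S z)" for S
    using finite_chain_chain_group[OF chain_group_restrict[OF zK, of S K] assms(4)] by simp
  show "finite {\<rho>. cone y (boundary (restrict_chain (- K\<^sub>0) z)) \<rho> \<noteq> 0}"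
    using fin by (simp add: finite_chain_support finite_chain_cone finite_chain_boundary)
  have outside: "boundary (restrict_chain (- K\<^sub>0) z) \<tau> = 0" if "\<tau> \<notin> K\<^sub>0" for \<tau>
    using chain_group_support[OF zK] bz assms(3) that by (rule boundary_restrict_cycle_outside)
  show "\<forall>\<rho>. cone y (boundary (restrict_chain (- K\<^sub>0) z)) \<rho> \<noteq> 0 \<longrightarrow> \<rho> \<in> K\<^sub>0 \<and> card \<rho> = k"
  proof (intro allI impI)
    fix \<rho> assume "cone y (boundary (restrict_chain (- K\<^sub>0) z)) \<rho> \<noteq> 0"
    then have \<rho>: "y \<in> \<rho>" "boundary (restrict_chain (- K\<^sub>0) z) (\<rho> - {y}) \<noteq> 0"
      by (auto dest!: cone_nonzeroD)
    then have "\<rho> - {y} \<in> K\<^sub>0" using outside by blast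
    obtain \<sigma> where \<sigma>: "restrict_chain (- K\<^sub>0) z \<sigma> \<noteq> 0" "\<rho> - {y} \<subseteq> \<sigma>" "finite \<sigma>"
      "card \<sigma> = Suc (card (\<rho> - {y}))" using \<rho>(2) by (rule boundary_nonzero_coface)
    have "\<sigma> \<notin> K\<^sub>0" "z \<sigma> \<noteq> 0" using \<sigma>(1) by (simp_all add: restrict_chain_def split: if_split_asm)
    then have "\<sigma> \<notin> K\<^sub>0" "\<sigma> \<in> K" "card \<sigma> = k" using zK unfolding chain_group_iff by blast+
    moreover have "insert y (\<rho> - {y}) = \<rho>" using \<rho> by auto
    moreover have "finite (\<rho> - {y})" using \<sigma>(2,3) by (rule finite_subset)
    ultimately show "\<rho> \<in> K\<^sub>0 \<and> card \<rho> = k"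
      using cone_old[OF \<open>\<rho> - {y} \<in> K\<^sub>0\<close>] \<sigma>(2,4) \<rho>(1) card_Suc_Diff1[of \<rho> y] by simp
  qed
qed

lemma diff_boundary_cone_restrict:
  assumes "finite_chain (restrict_chain (- S) z)"
  shows "(\<lambda>\<rho>. z \<rho> - boundary (cone y (restrict_chain (- S) z)) \<rho>) =
    (\<lambda>\<rho>. restrict_chain S z \<rho> + cone y (boundary (restrict_chain (- S) z)) \<rho>)"
proof
  fix \<rho>
  have "boundary (cone y (restrict_chain (- S) z)) \<rho> + cone y (boundary (restrict_chain (- S) z)) \<rho> =
      restrict_chain (- S) z \<rho>"
    by (rule boundary_cone[OF assms])
  moreover have "restrict_chain S z \<rho> + restrict_chain (- S) z \<rho> = z \<rho>"
    using fun_cong[OF restrict_chain_split[of S z], of \<rho>] by simp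
  ultimately show "z \<rho> - boundary (cone y (restrict_chain (- S) z)) \<rho> =
      restrict_chain S z \<rho> + cone y (boundary (restrict_chain (- S) z)) \<rho>" by linarith
qed

lemma acyclic_at_coned_extension:
  assumes "K\<^sub>0 \<subseteq> K" "downward_closed K\<^sub>0" "\<forall>\<sigma>\<in>K. finite \<sigma>"
    and cone_new: "\<And>\<rho>. \<rho> \<in> K \<Longrightarrow> \<rho> \<notin> K\<^sub>0 \<Longrightarrow> insert y \<rho> \<in> K"
    and cone_old: "\<And>\<rho> \<sigma>. \<rho> \<in> K\<^sub>0 \<Longrightarrow> \<sigma> \<in> K \<Longrightarrow> \<sigma> \<notin> K\<^sub>0 \<Longrightarrow> \<rho> \<subseteq> \<sigma> \<Longrightarrow> insert y \<rho> \<in> K\<^sub>0"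
    and "acyclic_at K\<^sub>0 k"
  shows "acyclic_at K k"
  unfolding acyclic_at_def
proof
  fix z assume z: "z \<in> cycles K k"
  then have zK: "z \<in> carrier (chain_group K k)" and bz: "boundary z = (\<lambda>\<tau>. 0)"
    by (auto simp: cycles_def)
  define w where "w = cone y (restrict_chain (- K\<^sub>0) z)"
  have w: "w \<in> carrier (chain_group K (Suc k))"
    unfolding w_def using zK assms(3) cone_new by (rule cone_restrict_chain_group)
  have fin_z: "finite_chain (restrict_chain S z)" for S
    using finite_chain_chain_group[OF chain_group_restrict[OF zK, of S K] assms(3)] by simp
  have "(\<lambda>\<rho>. z \<rho> - boundary w \<rho>) =
      (\<lambda>\<rho>. restrict_chain K\<^sub>0 z \<rho> + cone y (boundary (restrict_chain (- K\<^sub>0) z)) \<rho>)"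
    unfolding w_def by (rule diff_boundary_cone_restrict[OF fin_z])
  also have "\<dots> \<in> carrier (chain_group K\<^sub>0 k)"
    by (rule chain_group_add[OF chain_group_restrict[OF zK] cone_boundary_restrict_chain_group[OF z assms(1-3) cone_old]])
      auto
  finally have z': "(\<lambda>\<rho>. z \<rho> - boundary w \<rho>) \<in> carrier (chain_group K\<^sub>0 k)" .
  have fin_w: "finite_chain w" using w by (rule finite_chain_chain_group_Suc)
  have "boundary (\<lambda>\<rho>. z \<rho> - boundary w \<rho>) = (\<lambda>\<tau>. 0)"
    using boundary_diff[OF chain_group_support[OF zK] finite_chain_support[OF finite_chain_boundary[OF fin_w]]]
    by (simp add: bz boundary_boundary[OF fin_w])
  then obtain a where a: "a \<in> carrier (chain_group K\<^sub>0 (Suc k))" "boundary a = (\<lambda>\<rho>. z \<rho> - boundary w \<rho>)"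
    using acyclic_atD[OF \<open>acyclic_at K\<^sub>0 k\<close> z'] by blast
  have "boundary (\<lambda>\<sigma>. a \<sigma> + w \<sigma>) = z"
    using boundary_add[OF chain_group_support[OF a(1)] finite_chain_support[OF fin_w]] a(2) by simp
  moreover have "(\<lambda>\<sigma>. a \<sigma> + w \<sigma>) \<in> carrier (chain_group K (Suc k))"
    using chain_group_mono[OF a(1) assms(1)] w by (rule chain_group_add)
  ultimately show "z \<in> boundaries K k" unfolding boundaries_def by blast
qed

section \<open>Complexes fibred over a complex\<close>

text \<open>Over each face \<open>\<sigma>\<close> of \<open>\<Gamma>\<close> sits the full simplex on the vertex set \<open>A \<sigma> \<subseteq> Y\<close>, where \<open>Y\<close> is
  disjoint from the vertices of \<open>\<Gamma>\<close>: a face is \<open>\<sigma> \<union> \<tau>\<close> with \<open>\<sigma> \<in> \<Gamma>\<close> and \<open>\<tau> \<subseteq> A \<sigma>\<close>.\<close>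

definition fibred_complex :: "nat set set \<Rightarrow> (nat set \<Rightarrow> nat set) \<Rightarrow> nat set \<Rightarrow> nat set set" where
  "fibred_complex \<Gamma> A Y = {\<rho>. \<rho> - Y \<in> \<Gamma> \<and> \<rho> \<inter> Y \<subseteq> A (\<rho> - Y)}"

lemma fibred_complex_mono: "\<Gamma>' \<subseteq> \<Gamma> \<Longrightarrow> fibred_complex \<Gamma>' A Y \<subseteq> fibred_complex \<Gamma> A Y"
  by (auto simp: fibred_complex_def)

lemma insert_fibred_complex:
  "\<rho> \<in> fibred_complex \<Gamma> A Y \<Longrightarrow> y \<in> Y \<Longrightarrow> y \<in> A (\<rho> - Y) \<Longrightarrow> insert y \<rho> \<in> fibred_complex \<Gamma> A Y"
  by (auto simp: fibred_complex_def)

lemma downward_closed_fibred_complex: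
  assumes "downward_closed \<Gamma>" and antitone: "\<And>\<sigma> \<tau>. \<sigma> \<in> \<Gamma> \<Longrightarrow> \<tau> \<subseteq> \<sigma> \<Longrightarrow> A \<sigma> \<subseteq> A \<tau>"
  shows "downward_closed (fibred_complex \<Gamma> A Y)"
  unfolding downward_closed_def
proof (intro ballI allI impI)
  fix \<rho> \<rho>' assume "\<rho> \<in> fibred_complex \<Gamma> A Y" "\<rho>' \<subseteq> \<rho>"
  moreover from this have "\<rho> - Y \<in> \<Gamma>" "\<rho>' - Y \<subseteq> \<rho> - Y" by (auto simp: fibred_complex_def)
  then have "\<rho>' - Y \<in> \<Gamma>" "A (\<rho> - Y) \<subseteq> A (\<rho>' - Y)"
    using downward_closedD[OF assms(1)] antitone by blast+
  ultimately show "\<rho>' \<in> fibred_complex \<Gamma> A Y" by (auto simp: fibred_complex_def)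
qed

lemma finite_faces_fibred_complex:
  assumes "\<And>\<sigma>. \<sigma> \<in> \<Gamma> \<Longrightarrow> finite \<sigma> \<and> finite (A \<sigma>)"
  shows "\<forall>\<rho>\<in>fibred_complex \<Gamma> A Y. finite \<rho>"
proof
  fix \<rho> assume "\<rho> \<in> fibred_complex \<Gamma> A Y"
  then have "finite (\<rho> - Y)" "finite (\<rho> \<inter> Y)"
    using assms by (auto simp: fibred_complex_def intro: finite_subset)
  then have "finite ((\<rho> - Y) \<union> (\<rho> \<inter> Y))" by blast
  then show "finite \<rho>" by (simp add: Un_Diff_Int)
qed

lemma downward_closed_remove_maximal:
  assumes "downward_closed \<Gamma>" "\<And>\<sigma>. \<sigma> \<in> \<Gamma> \<Longrightarrow> s \<subseteq> \<sigma> \<Longrightarrow> \<sigma> = s"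
  shows "downward_closed (\<Gamma> - {s})"
  using assms unfolding downward_closed_def by blast

text \<open>Removing a maximal face \<open>s\<close> of the base is an elementary collapse of the fibred complex, with
  apex any vertex of the nonempty fibre \<open>A s\<close>.\<close>

lemma acyclic_at_fibred_complex_remove_maximal:
  assumes "s \<in> \<Gamma>" and maximal: "\<And>\<sigma>. \<sigma> \<in> \<Gamma> \<Longrightarrow> s \<subseteq> \<sigma> \<Longrightarrow> \<sigma> = s"
    and "downward_closed \<Gamma>" and antitone: "\<And>\<sigma> \<tau>. \<sigma> \<in> \<Gamma> \<Longrightarrow> \<tau> \<subseteq> \<sigma> \<Longrightarrow> A \<sigma> \<subseteq> A \<tau>"
    and "\<And>\<sigma>. \<sigma> \<in> \<Gamma> \<Longrightarrow> finite \<sigma> \<and> finite (A \<sigma>)"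
    and y: "y \<in> A s" "y \<in> Y"
    and "acyclic_at (fibred_complex (\<Gamma> - {s}) A Y) k"
  shows "acyclic_at (fibred_complex \<Gamma> A Y) k"
proof (rule acyclic_at_coned_extension)
  have "\<rho> - Y = s" if "\<rho> \<in> fibred_complex \<Gamma> A Y" "\<rho> \<notin> fibred_complex (\<Gamma> - {s}) A Y" for \<rho>
    using that by (auto simp: fibred_complex_def)
  note new_face = this
  show "fibred_complex (\<Gamma> - {s}) A Y \<subseteq> fibred_complex \<Gamma> A Y" by (rule fibred_complex_mono) blast
  show "downward_closed (fibred_complex (\<Gamma> - {s}) A Y)"
  proof (rule downward_closed_fibred_complex[OF downward_closed_remove_maximal[OF assms(3) maximal]])
    fix \<sigma> \<tau> assume "\<sigma> \<in> \<Gamma> - {s}" "\<tau> \<subseteq> \<sigma>"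
    then show "A \<sigma> \<subseteq> A \<tau>" using antitone by blast
  qed
  show "\<forall>\<sigma>\<in>fibred_complex \<Gamma> A Y. finite \<sigma>" by (rule finite_faces_fibred_complex) fact
  show "insert y \<rho> \<in> fibred_complex \<Gamma> A Y"
    if "\<rho> \<in> fibred_complex \<Gamma> A Y" "\<rho> \<notin> fibred_complex (\<Gamma> - {s}) A Y" for \<rho>
    using insert_fibred_complex[OF that(1) y(2)] new_face[OF that] y(1) by simp
  show "insert y \<rho> \<in> fibred_complex (\<Gamma> - {s}) A Y"
    if \<rho>: "\<rho> \<in> fibred_complex (\<Gamma> - {s}) A Y" and \<sigma>: "\<sigma> \<in> fibred_complex \<Gamma> A Y"
      "\<sigma> \<notin> fibred_complex (\<Gamma> - {s}) A Y" "\<rho> \<subseteq> \<sigma>" for \<rho> \<sigma>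
  proof -
    have "\<rho> - Y \<subseteq> s" using new_face[OF \<sigma>(1,2)] \<sigma>(3) by blast
    then have "y \<in> A (\<rho> - Y)" using antitone[OF \<open>s \<in> \<Gamma>\<close>] y(1) by blast
    then show ?thesis using insert_fibred_complex[OF \<rho> y(2)] by simp
  qed
qed fact

lemma acyclic_at_fibred_complex:
  assumes "finite \<Gamma>" "downward_closed \<Gamma>"
    and antitone: "\<And>\<sigma> \<tau>. \<sigma> \<in> \<Gamma> \<Longrightarrow> \<tau> \<subseteq> \<sigma> \<Longrightarrow> A \<sigma> \<subseteq> A \<tau>"
    and fibres: "\<And>\<sigma>. \<sigma> \<in> \<Gamma> \<Longrightarrow> A \<sigma> \<noteq> {} \<and> A \<sigma> \<subseteq> Y"
    and finite: "\<And>\<sigma>. \<sigma> \<in> \<Gamma> \<Longrightarrow> finite \<sigma> \<and> finite (A \<sigma>)"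
  shows "acyclic_at (fibred_complex \<Gamma> A Y) k"
  using \<open>finite \<Gamma>\<close> \<open>downward_closed \<Gamma>\<close>
proof (induction \<Gamma> rule: finite_remove_induct)
  case empty
  show ?case by (rule acyclic_at_no_faces) (simp add: fibred_complex_def)
next
  case (remove \<Gamma>')
  obtain s where s: "s \<in> \<Gamma>'" "\<And>\<sigma>. \<sigma> \<in> \<Gamma>' \<Longrightarrow> s \<subseteq> \<sigma> \<Longrightarrow> \<sigma> = s"
    using finite_has_maximal[OF remove.hyps(1,2)] by auto
  obtain y where y: "y \<in> A s" "y \<in> Y" using fibres s(1) remove.hyps(3) by blast
  have IH: "acyclic_at (fibred_complex (\<Gamma>' - {s}) A Y) k"
    using remove.IH[OF s(1)] downward_closed_remove_maximal[OF remove.prems s(2)] by blast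
  show ?case
  proof (rule acyclic_at_fibred_complex_remove_maximal[where y = y, OF s remove.prems])
    show "A \<sigma> \<subseteq> A \<tau>" if "\<sigma> \<in> \<Gamma>'" "\<tau> \<subseteq> \<sigma>" for \<sigma> \<tau>
      using antitone that remove.hyps(3) by blast
    show "finite \<sigma> \<and> finite (A \<sigma>)" if "\<sigma> \<in> \<Gamma>'" for \<sigma>
      using finite that remove.hyps(3) by blast
  qed (use y IH in auto)
qed

lemma acyclic_at_simplex:
  assumes "finite V"
  shows "acyclic_at (Pow V) (Suc k)"
proof (cases "V = {}")
  case True
  then show ?thesis by (intro acyclic_at_no_faces) auto
next
  case False
  have "Pow V = fibred_complex {{}} (\<lambda>_. V) V" by (auto simp: fibred_complex_def)
  moreover have "acyclic_at (fibred_complex {{}} (\<lambda>_. V) V) (Suc k)"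
    using False assms by (intro acyclic_at_fibred_complex) (auto simp: downward_closed_def)
  ultimately show ?thesis by simp
qed

section \<open>Gluing two acyclic complexes\<close>

text \<open>The connecting homomorphism of the Mayer--Vietoris sequence of \<open>K \<union> L\<close>.\<close>

definition connecting_map :: "nat set set \<Rightarrow> (nat set \<Rightarrow> int) \<Rightarrow> (nat set \<Rightarrow> int)" where
  "connecting_map L z = boundary (restrict_chain (- L) z)"

lemma connecting_map_cycles:
  assumes "downward_closed K" "downward_closed L" "z \<in> cycles (K \<union> L) (Suc k)"
  shows "connecting_map L z \<in> cycles (K \<inter> L) k"
proof -
  have z: "z \<in> carrier (chain_group (K \<union> L) (Suc k))" and bz: "boundary z = (\<lambda>\<tau>. 0)"
    using assms(3) by (auto simp: cycles_def)
  have zK: "restrict_chain (- L) z \<in> carrier (chain_group K (Suc k))"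
    and zL: "restrict_chain L z \<in> carrier (chain_group L (Suc k))"
    by (rule chain_group_restrict[OF z]; blast)+
  have "connecting_map L z = (\<lambda>\<tau>. - boundary (restrict_chain L z) \<tau>)"
  proof
    fix \<tau>
    have "boundary z \<tau> = boundary (restrict_chain L z) \<tau> + boundary (restrict_chain (- L) z) \<tau>"
      by (rule fun_cong[OF boundary_split[OF chain_group_support[OF z]]])
    then show "connecting_map L z \<tau> = - boundary (restrict_chain L z) \<tau>"
      using bz by (simp add: connecting_map_def)
  qed
  then have "connecting_map L z \<in> carrier (chain_group L k)"
    using chain_group_uminus[OF boundary_chain_group[OF assms(2) zL]] by simp
  moreover have "connecting_map L z \<in> carrier (chain_group K k)"
    unfolding connecting_map_def by (rule boundary_chain_group[OF assms(1) zK])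
  moreover have "boundary (connecting_map L z) = (\<lambda>\<tau>. 0)"
    unfolding connecting_map_def by (rule boundary_boundary[OF finite_chain_chain_group_Suc[OF zK]])
  ultimately show ?thesis by (simp add: cycles_def chain_group_Int)
qed

lemma connecting_map_add:
  assumes "finite {\<sigma>. a \<sigma> \<noteq> 0}" "finite {\<sigma>. b \<sigma> \<noteq> 0}"
  shows "connecting_map L (\<lambda>\<sigma>. a \<sigma> + b \<sigma>) = (\<lambda>\<tau>. connecting_map L a \<tau> + connecting_map L b \<tau>)"
  unfolding connecting_map_def restrict_chain_add
  by (rule boundary_add[OF finite_support_restrict_chain[OF assms(1)] finite_support_restrict_chain[OF assms(2)]])

lemma connecting_map_boundaries:
  assumes "downward_closed K" "downward_closed L" "z \<in> boundaries (K \<union> L) (Suc k)"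
  shows "connecting_map L z \<in> boundaries (K \<inter> L) k"
proof -
  obtain w where w: "w \<in> carrier (chain_group (K \<union> L) (Suc (Suc k)))" "z = boundary w"
    using assms(3) by (auto simp: boundaries_def)
  define h where "h = boundary (restrict_chain (- L) w)"
  have wK: "restrict_chain (- L) w \<in> carrier (chain_group K (Suc (Suc k)))"
    and wL: "restrict_chain L w \<in> carrier (chain_group L (Suc (Suc k)))"
    by (rule chain_group_restrict[OF w(1)]; blast)+
  have h: "h \<in> carrier (chain_group K (Suc k))"
    unfolding h_def by (rule boundary_chain_group[OF assms(1) wK])
  have hL: "boundary (restrict_chain L w) \<in> carrier (chain_group L (Suc k))"
    by (rule boundary_chain_group[OF assms(2) wL])
  have "restrict_chain (- L) z = (\<lambda>\<sigma>. h \<sigma> - restrict_chain L h \<sigma>)"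
  proof
    fix \<sigma>
    have "z \<sigma> = boundary (restrict_chain L w) \<sigma> + h \<sigma>"
      unfolding w(2) h_def by (rule fun_cong[OF boundary_split[OF chain_group_support[OF w(1)]]])
    moreover have "boundary (restrict_chain L w) \<sigma> = 0" if "\<sigma> \<notin> L"
      using hL that by (auto simp: chain_group_iff)
    ultimately show "restrict_chain (- L) z \<sigma> = h \<sigma> - restrict_chain L h \<sigma>"
      by (auto simp: restrict_chain_def)
  qed
  then have "connecting_map L z = (\<lambda>\<tau>. boundary h \<tau> - boundary (restrict_chain L h) \<tau>)"
    unfolding connecting_map_def
    using boundary_diff[OF chain_group_support[OF h] finite_support_restrict_chain[OF chain_group_support[OF h]]]
    by simp
  also have "\<dots> = boundary (\<lambda>\<sigma>. - restrict_chain L h \<sigma>)"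
    using boundary_boundary[OF finite_chain_chain_group_Suc[OF wK]] by (simp add: h_def boundary_uminus)
  finally show ?thesis
    unfolding boundaries_def
    using chain_group_uminus[OF chain_group_restrict[OF h, of L "K \<inter> L"]] by blast
qed

lemma boundaries_of_connecting_map:
  assumes "downward_closed K" "downward_closed L" "acyclic_at K (Suc k)" "acyclic_at L (Suc k)"
    and z: "z \<in> cycles (K \<union> L) (Suc k)" and "connecting_map L z \<in> boundaries (K \<inter> L) k"
  shows "z \<in> boundaries (K \<union> L) (Suc k)"
proof -
  have zc: "z \<in> carrier (chain_group (K \<union> L) (Suc k))" and bz: "boundary z = (\<lambda>\<tau>. 0)"
    using z by (auto simp: cycles_def)
  obtain g where g: "g \<in> carrier (chain_group (K \<inter> L) (Suc k))" "connecting_map L z = boundary g"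
    using assms(6) by (auto simp: boundaries_def)
  define zK zL where "zK = restrict_chain (- L) z" and "zL = restrict_chain L z"
  have zK: "zK \<in> carrier (chain_group K (Suc k))" and zL: "zL \<in> carrier (chain_group L (Suc k))"
    unfolding zK_def zL_def by (rule chain_group_restrict[OF zc]; blast)+
  have gK: "g \<in> carrier (chain_group K (Suc k))" and gL: "g \<in> carrier (chain_group L (Suc k))"
    using g(1) by (auto intro: chain_group_mono)
  have "boundary (\<lambda>\<sigma>. zK \<sigma> - g \<sigma>) = (\<lambda>\<tau>. 0)"
    using boundary_diff[OF chain_group_support[OF zK] chain_group_support[OF gK]] g(2)
    by (simp add: connecting_map_def zK_def)
  then obtain a where a: "a \<in> carrier (chain_group K (Suc (Suc k)))" "boundary a = (\<lambda>\<sigma>. zK \<sigma> - g \<sigma>)"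
    using acyclic_atD[OF assms(3) chain_group_diff[OF zK gK]] by blast
  have "boundary (\<lambda>\<sigma>. zL \<sigma> + g \<sigma>) = (\<lambda>\<tau>. boundary zL \<tau> + boundary zK \<tau>)"
    using boundary_add[OF chain_group_support[OF zL] chain_group_support[OF gL]] g(2)
    by (simp add: connecting_map_def zK_def)
  also have "\<dots> = (\<lambda>\<tau>. 0)"
    using boundary_split[OF chain_group_support[OF zc], of L] bz by (simp add: zK_def zL_def)
  finally obtain b where b: "b \<in> carrier (chain_group L (Suc (Suc k)))" "boundary b = (\<lambda>\<sigma>. zL \<sigma> + g \<sigma>)"
    using acyclic_atD[OF assms(4) chain_group_add[OF zL gL]] by blast
  have "boundary (\<lambda>\<sigma>. a \<sigma> + b \<sigma>) = (\<lambda>\<sigma>. zL \<sigma> + zK \<sigma>)"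
    using boundary_add[OF chain_group_support[OF a(1)] chain_group_support[OF b(1)]] a(2) b(2)
    by (simp add: add.commute)
  also have "\<dots> = z" unfolding zK_def zL_def by (rule restrict_chain_split)
  finally show ?thesis
    unfolding boundaries_def
    using chain_group_add[OF chain_group_mono[OF a(1)] chain_group_mono[OF b(1)], of "K \<union> L"] by blast
qed

lemma connecting_map_onto:
  assumes "acyclic_at K k" "acyclic_at L k" and c: "c \<in> cycles (K \<inter> L) k"
  shows "\<exists>z\<in>cycles (K \<union> L) (Suc k). \<exists>b\<in>boundaries (K \<inter> L) k. connecting_map L z = (\<lambda>\<sigma>. b \<sigma> + c \<sigma>)"
proof -
  have cc: "c \<in> carrier (chain_group (K \<inter> L) k)" and bc: "boundary c = (\<lambda>\<tau>. 0)"
    using c by (auto simp: cycles_def)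
  obtain a where a: "a \<in> carrier (chain_group K (Suc k))" "boundary a = c"
    using acyclic_atD[OF assms(1) chain_group_mono[OF cc] bc] by blast
  obtain b where b: "b \<in> carrier (chain_group L (Suc k))" "boundary b = c"
    using acyclic_atD[OF assms(2) chain_group_mono[OF cc] bc] by blast
  define z where "z = (\<lambda>\<sigma>. a \<sigma> - b \<sigma>)"
  have "z \<in> carrier (chain_group (K \<union> L) (Suc k))"
    unfolding z_def by (rule chain_group_diff[OF chain_group_mono[OF a(1)] chain_group_mono[OF b(1)]]) auto
  moreover have "boundary z = (\<lambda>\<tau>. 0)"
    using boundary_diff[OF chain_group_support[OF a(1)] chain_group_support[OF b(1)]] a(2) b(2)
    by (simp add: z_def)
  ultimately have z: "z \<in> cycles (K \<union> L) (Suc k)" by (simp add: cycles_def)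
  have "restrict_chain (- L) z = (\<lambda>\<sigma>. a \<sigma> - restrict_chain L a \<sigma>)"
  proof
    fix \<sigma>
    have "b \<sigma> = 0" if "\<sigma> \<notin> L" using b(1) that by (auto simp: chain_group_iff)
    then show "restrict_chain (- L) z \<sigma> = a \<sigma> - restrict_chain L a \<sigma>"
      by (auto simp: restrict_chain_def z_def)
  qed
  then have "connecting_map L z = (\<lambda>\<tau>. boundary (\<lambda>\<sigma>. - restrict_chain L a \<sigma>) \<tau> + c \<tau>)"
    unfolding connecting_map_def
    using boundary_diff[OF chain_group_support[OF a(1)] finite_support_restrict_chain[OF chain_group_support[OF a(1)]]]
      a(2) by (simp add: boundary_uminus)
  moreover have "boundary (\<lambda>\<sigma>. - restrict_chain L a \<sigma>) \<in> boundaries (K \<inter> L) k"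
    unfolding boundaries_def
    using chain_group_uminus[OF chain_group_restrict[OF a(1), of L "K \<inter> L"]] by blast
  ultimately show ?thesis using z by blast
qed

lemma reduced_homology_union_acyclic_iso:
  assumes "downward_closed K" "downward_closed L"
    and "acyclic_at K (Suc i)" "acyclic_at K (Suc (Suc i))"
    and "acyclic_at L (Suc i)" "acyclic_at L (Suc (Suc i))"
  shows "reduced_homology (K \<union> L) (Suc i) \<cong> reduced_homology (K \<inter> L) i"
  unfolding reduced_homology_eq
proof (rule quotient_iso_of_hom)
  let ?Z = "cycles (K \<union> L) (Suc (Suc i))" and ?Z' = "cycles (K \<inter> L) (Suc i)"
  show "comm_group (pointwise_group ?Z)" "comm_group (pointwise_group ?Z')"
    by (rule comm_group_pointwise_group[OF additive_subgroup_cycles])+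
  show "subgroup (boundaries (K \<union> L) (Suc (Suc i))) (pointwise_group ?Z)"
    "subgroup (boundaries (K \<inter> L) (Suc i)) (pointwise_group ?Z')"
    by (rule subgroup_pointwise_group[OF additive_subgroup_cycles additive_subgroup_boundaries
        boundaries_subset_cycles], simp add: assms(1,2) downward_closed_Un downward_closed_Int)+
  show "connecting_map L \<in> hom (pointwise_group ?Z) (pointwise_group ?Z')"
  proof (rule homI)
    fix z assume "z \<in> carrier (pointwise_group ?Z)"
    then show "connecting_map L z \<in> carrier (pointwise_group ?Z')"
      using connecting_map_cycles[OF assms(1,2)] by simp
  next
    fix a b assume "a \<in> carrier (pointwise_group ?Z)" "b \<in> carrier (pointwise_group ?Z)"
    then have "finite {\<sigma>. a \<sigma> \<noteq> 0}" "finite {\<sigma>. b \<sigma> \<noteq> 0}"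
      by (auto simp: cycles_def dest: chain_group_support)
    then show "connecting_map L (a \<otimes>\<^bsub>pointwise_group ?Z\<^esub> b) =
        connecting_map L a \<otimes>\<^bsub>pointwise_group ?Z'\<^esub> connecting_map L b"
      by (simp add: connecting_map_add)
  qed
  show "connecting_map L z \<in> boundaries (K \<inter> L) (Suc i) \<longleftrightarrow> z \<in> boundaries (K \<union> L) (Suc (Suc i))"
    if "z \<in> carrier (pointwise_group ?Z)" for z
    using that connecting_map_boundaries[OF assms(1,2)] boundaries_of_connecting_map[OF assms(1,2,4,6)]
    by auto
  show "\<exists>z\<in>carrier (pointwise_group ?Z). \<exists>b\<in>boundaries (K \<inter> L) (Suc i).
      connecting_map L z = b \<otimes>\<^bsub>pointwise_group ?Z'\<^esub> c"
    if "c \<in> carrier (pointwise_group ?Z')" for c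
    using that connecting_map_onto[OF assms(3,5)] by simp
qed

lemma downward_closed_simplicial_complex: "simplicial_complex_on V K \<Longrightarrow> downward_closed K"
  by (simp add: simplicial_complex_on_def downward_closed_def)

lemma face_subset_facet:
  assumes "finite K" "\<sigma> \<in> K"
  obtains F where "F \<in> facets K" "\<sigma> \<subseteq> F"
proof -
  let ?S = "{F \<in> K. \<sigma> \<subseteq> F}"
  have "finite ?S" "?S \<noteq> {}" using assms by auto
  from finite_has_maximal[OF this] obtain F where F: "F \<in> ?S" "\<forall>H\<in>?S. F \<subseteq> H \<longrightarrow> F = H"
    by blast
  then have "F \<in> facets K" unfolding facets_def by blast
  with F(1) show ?thesis using that by blast
qed

lemma fibred_complex_eq:
  assumes "\<And>\<sigma>. \<sigma> \<in> \<Gamma> \<Longrightarrow> \<sigma> \<inter> Y = {} \<and> A \<sigma> \<subseteq> Y"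
  shows "fibred_complex \<Gamma> A Y = {\<sigma> \<union> \<tau> | \<sigma> \<tau>. \<sigma> \<in> \<Gamma> \<and> \<tau> \<subseteq> A \<sigma>}"
proof (intro equalityI subsetI)
  fix \<rho> assume "\<rho> \<in> fibred_complex \<Gamma> A Y"
  moreover have "\<rho> = (\<rho> - Y) \<union> (\<rho> \<inter> Y)" by blast
  ultimately show "\<rho> \<in> {\<sigma> \<union> \<tau> | \<sigma> \<tau>. \<sigma> \<in> \<Gamma> \<and> \<tau> \<subseteq> A \<sigma>}"
    unfolding fibred_complex_def by blast
next
  fix \<rho> assume "\<rho> \<in> {\<sigma> \<union> \<tau> | \<sigma> \<tau>. \<sigma> \<in> \<Gamma> \<and> \<tau> \<subseteq> A \<sigma>}"
  then obtain \<sigma> \<tau> where "\<rho> = \<sigma> \<union> \<tau>" "\<sigma> \<in> \<Gamma>" "\<tau> \<subseteq> A \<sigma>" by blast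
  moreover have "\<sigma> \<inter> Y = {}" "\<tau> \<subseteq> Y" using assms calculation(2,3) by blast+
  ultimately have "\<rho> - Y = \<sigma>" "\<rho> \<inter> Y = \<tau>" "\<sigma> \<in> \<Gamma>" "\<tau> \<subseteq> A \<sigma>" by blast+
  then show "\<rho> \<in> fibred_complex \<Gamma> A Y" by (simp add: fibred_complex_def)
qed

lemma fibred_complex_Int_Pow:
  assumes "\<Gamma> \<subseteq> Pow V" "Y \<inter> V = {}"
  shows "fibred_complex \<Gamma> A Y \<inter> Pow V = \<Gamma>"
proof -
  have "\<rho> - Y = \<rho>" "\<rho> \<inter> Y = {}" if "\<rho> \<subseteq> V" for \<rho> using that assms(2) by blast+
  then show ?thesis using assms(1) by (auto simp: fibred_complex_def)
qed

lemma reduced_homology_fibred_complex_union_simplex: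
  assumes "finite V" "\<Gamma> \<subseteq> Pow V" "downward_closed \<Gamma>" "Y \<inter> V = {}"
    and antitone: "\<And>\<sigma> \<tau>. \<sigma> \<in> \<Gamma> \<Longrightarrow> \<tau> \<subseteq> \<sigma> \<Longrightarrow> A \<sigma> \<subseteq> A \<tau>"
    and fibres: "\<And>\<sigma>. \<sigma> \<in> \<Gamma> \<Longrightarrow> A \<sigma> \<noteq> {} \<and> A \<sigma> \<subseteq> Y \<and> finite (A \<sigma>)"
  shows "reduced_homology ({\<sigma> \<union> \<tau> | \<sigma> \<tau>. \<sigma> \<in> \<Gamma> \<and> \<tau> \<subseteq> A \<sigma>} \<union> Pow V) (Suc i)
    \<cong> reduced_homology \<Gamma> i"
proof -
  have "finite \<Gamma>" by (rule finite_subset[OF assms(2)]) (simp add: assms(1))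
  have finite: "finite \<sigma> \<and> finite (A \<sigma>)" if "\<sigma> \<in> \<Gamma>" for \<sigma>
  proof
    have "\<sigma> \<subseteq> V" using that assms(2) by blast
    then show "finite \<sigma>" using assms(1) by (rule finite_subset)
    show "finite (A \<sigma>)" using fibres[OF that] by blast
  qed
  have nonempty: "A \<sigma> \<noteq> {} \<and> A \<sigma> \<subseteq> Y" if "\<sigma> \<in> \<Gamma>" for \<sigma>
    using fibres[OF that] by blast
  have "downward_closed (fibred_complex \<Gamma> A Y)"
    using assms(3) antitone by (rule downward_closed_fibred_complex)
  moreover have "downward_closed (Pow V)" by (auto simp: downward_closed_def)
  moreover have "acyclic_at (fibred_complex \<Gamma> A Y) k" for k
    using \<open>finite \<Gamma>\<close> assms(3) antitone nonempty finite by (rule acyclic_at_fibred_complex)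
  moreover have "acyclic_at (Pow V) (Suc k)" for k using assms(1) by (rule acyclic_at_simplex)
  ultimately have "reduced_homology (fibred_complex \<Gamma> A Y \<union> Pow V) (Suc i)
      \<cong> reduced_homology (fibred_complex \<Gamma> A Y \<inter> Pow V) i"
    by (intro reduced_homology_union_acyclic_iso)
  moreover have "{\<sigma> \<union> \<tau> | \<sigma> \<tau>. \<sigma> \<in> \<Gamma> \<and> \<tau> \<subseteq> A \<sigma>} = fibred_complex \<Gamma> A Y"
  proof (rule fibred_complex_eq[symmetric])
    show "\<sigma> \<inter> Y = {} \<and> A \<sigma> \<subseteq> Y" if "\<sigma> \<in> \<Gamma>" for \<sigma>
      using that assms(2,4) nonempty by blast
  qed
  ultimately show ?thesis using fibred_complex_Int_Pow[OF assms(2,4), of A] by simp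
qed

theorem theorem4p7:
  fixes V1 :: "nat set" and \<Gamma> :: "nat set set" and m :: nat
    and G :: "nat \<Rightarrow> nat set" and y :: "nat \<Rightarrow> nat"
  assumes "finite V1"
    and "simplicial_complex_on V1 \<Gamma>"
    and "card (facets \<Gamma>) = m"
    and "\<forall>j<m. G j \<subseteq> V1 \<and> V1 - G j \<in> \<Gamma>"
    and "\<forall>F\<in>facets \<Gamma>. \<exists>j<m. F = V1 - G j"
    and "inj_on y {..<m}"
    and "y ` {..<m} \<inter> V1 = {}"
  shows "\<forall>i::nat.
    reduced_homology
      ({\<sigma> \<union> \<tau> | \<sigma> \<tau>. \<sigma> \<in> \<Gamma> \<and> \<tau> \<subseteq> y ` {j. j < m \<and> \<sigma> \<subseteq> V1 - G j}} \<union> Pow V1) (Suc i)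
    \<cong> reduced_homology \<Gamma> i"
proof
  fix i
  have \<Gamma>: "\<Gamma> \<subseteq> Pow V1" "downward_closed \<Gamma>"
    using assms(2) by (simp add: simplicial_complex_on_def, rule downward_closed_simplicial_complex)
  show "reduced_homology
      ({\<sigma> \<union> \<tau> | \<sigma> \<tau>. \<sigma> \<in> \<Gamma> \<and> \<tau> \<subseteq> y ` {j. j < m \<and> \<sigma> \<subseteq> V1 - G j}} \<union> Pow V1) (Suc i)
    \<cong> reduced_homology \<Gamma> i"
  proof (rule reduced_homology_fibred_complex_union_simplex[OF assms(1) \<Gamma> assms(7)])
    show "y ` {j. j < m \<and> \<sigma> \<subseteq> V1 - G j} \<subseteq> y ` {j. j < m \<and> \<tau> \<subseteq> V1 - G j}" if "\<tau> \<subseteq> \<sigma>" for \<sigma> \<tau>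
      using that by blast
    fix \<sigma> assume \<sigma>: "\<sigma> \<in> \<Gamma>"
    have "finite \<Gamma>" by (rule finite_subset[OF \<Gamma>(1)]) (simp add: assms(1))
    then obtain F where "F \<in> facets \<Gamma>" "\<sigma> \<subseteq> F" using face_subset_facet \<sigma> by blast
    moreover obtain j where "j < m" "F = V1 - G j" using assms(5) \<open>F \<in> facets \<Gamma>\<close> by blast
    ultimately have "y j \<in> y ` {j. j < m \<and> \<sigma> \<subseteq> V1 - G j}" by blast
    moreover have "finite {j. j < m \<and> \<sigma> \<subseteq> V1 - G j}" by (rule finite_subset[of _ "{..<m}"]) auto
    ultimately show "y ` {j. j < m \<and> \<sigma> \<subseteq> V1 - G j} \<noteq> {} \<and> y ` {j. j < m \<and> \<sigma> \<subseteq> V1 - G j} \<subseteq> y ` {..<m}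
        \<and> finite (y ` {j. j < m \<and> \<sigma> \<subseteq> V1 - G j})"
      by (intro conjI) (blast, blast, simp)
  qed
qed

end
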